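(* For every $0<p<1$ we have $\frac12<\pi(p,p)<1$.
   Context: Let $\beta_1,\beta_2,\ldots$ be independent Bernoulli random variables with success probability $p$. A stake sequence is a sequence $\gamma=(c_1,c_2,\ldots)$ of non-negative reals with $c_1\ge c_2\ge\cdots$ and $\sum_i c_i=1$; write $S_\gamma=\sum_i c_i\beta_i$. For $0\le p\le t\le 1$ define $\pi(p,t)=\sup\{\mathbf P(S_\gamma\ge t)\mid \gamma \text{ a stake sequence}\}$. *)

theory Defs
  imports "HOL-Probability.Probability"
begin

text \<open>Probability space of an infinite i.i.d. sequence of Bernoulli(p) variables
  beta_0, beta_1, ... (indexed from 0), modelled as the infinite product measure on
  nat => bool.\<close>
definition bern_seq :: "real \<Rightarrow> (nat \<Rightarrow> bool) measure" where
  "bern_seq p = PiM UNIV (\<lambda>_. measure_pmf (bernoulli_pmf p))"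

definition stake_seq :: "(nat \<Rightarrow> real) \<Rightarrow> bool" where
  "stake_seq c \<longleftrightarrow> (\<forall>i. 0 \<le> c i) \<and> (\<forall>i. c (Suc i) \<le> c i) \<and> c sums 1"

definition S_gamma :: "(nat \<Rightarrow> real) \<Rightarrow> (nat \<Rightarrow> bool) \<Rightarrow> real" where
  "S_gamma c \<omega> = (\<Sum>i. c i * (if \<omega> i then 1 else 0))"

definition pi_fun :: "real \<Rightarrow> real \<Rightarrow> real" where
  "pi_fun p t = Sup {measure (bern_seq p) {\<omega> \<in> space (bern_seq p). S_gamma c \<omega> \<ge> t} | c. stake_seq c}"

end

theory Submission
  imports Defs
begin

text \<open>
  Lower bound: put stake \<open>1/n\<close> on each of the first \<open>n = \<lfloor>1/p\<rfloor>\<close> coordinates. A single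
  success already gives \<open>S \<ge> 1/n \<ge> p\<close>, so \<open>P(S \<ge> p) = 1 - (1 - p)^n > 1/2\<close>.

  Upper bound: let \<open>v = p(1 - p)\<close>. Choose \<open>n\<close> so large that the tail \<open>\<Sum>i\<ge>n. c i\<close> is
  small compared with the standard deviation \<open>\<sigma> = sqrt (v Q)\<close>, \<open>Q = \<Sum>i<n. c i^2\<close>,
  of \<open>W = \<Sum>i<n. c i (p - \<beta> i)\<close>; on \<open>S \<ge> p\<close> one has \<open>W \<le>\<close> tail \<open>< v\<sigma>/4\<close>.
  Independence gives \<open>E W^4 \<le> v Q^2 = \<sigma>^4/v\<close>. The quartic
  \<open>q(w) = w + v w^2 - v^2 w^4/4 - v/2\<close> is bounded by \<open>C = 1 + (1 + v)^2/v^2\<close> and is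
  non-positive for \<open>w \<le> v/4\<close>, so \<open>q/C\<close> lies below the indicator of \<open>w > v/4\<close>, while the
  moment bounds give \<open>E q(W/\<sigma>) \<ge> v/4\<close>. Hence \<open>P(S < p) \<ge> P(W > v\<sigma>/4) \<ge> v/(4C)\<close>,
  uniformly in the stakes.
\<close>

lemma mult_sq_le_add_quartic:
  fixes v t :: real
  assumes "0 < v" and "v \<le> 1/4" and "0 \<le> t"
  shows "v * t^2 \<le> t + v^2/4 * t^4"
proof (cases "v * t \<le> 1")
  case True
  then have "t * (v * t) \<le> t * 1" using assms(3) by (rule mult_left_mono)
  moreover have "0 \<le> v^2/4 * t^4" by simp
  ultimately show ?thesis by (simp add: power2_eq_square algebra_simps)
next
  case False
  have "v * t \<le> 1/4 * t" using assms(2,3) by (rule mult_right_mono)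
  with False have "4 \<le> t" by linarith
  then have "1 * 4 \<le> (v * t) * t" using False by (intro mult_mono) auto
  then have "4 \<le> v * t^2" by (simp add: power2_eq_square mult.assoc)
  then have "v * t^2 * 1 \<le> v * t^2 * (v * t^2 / 4)" by (intro mult_left_mono) auto
  then show ?thesis using assms(3) by (simp add: power2_eq_square power4_eq_xxxx algebra_simps)
qed

lemma quartic_le_const:
  fixes v w :: real
  assumes "0 < v"
  shows "w + v * w^2 - v^2/4 * w^4 \<le> 1 + (1 + v)^2 / v^2"
proof -
  have "0 \<le> (v/2 * w^2 - (1 + v)/v)^2" by simp
  then have amgm: "(1 + v) * w^2 \<le> v^2/4 * w^4 + (1 + v)^2/v^2"
    using assms by (simp add: power2_eq_square power4_eq_xxxx field_simps)
  have "0 \<le> (w - 1/2)^2" by simp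
  then have "w \<le> 1 + w^2" by (simp add: power2_eq_square algebra_simps)
  with amgm show ?thesis by (simp add: algebra_simps)
qed

lemma quartic_le_below:
  fixes v w :: real
  assumes "0 < v" and "v \<le> 1/4" and "w \<le> v/4"
  shows "w + v * w^2 - v^2/4 * w^4 \<le> v/2"
proof (cases "0 \<le> w")
  case True
  then have "w^2 \<le> (v/4)^2" using assms(3) by (intro power_mono)
  also have "\<dots> \<le> (1/2)^2" using assms(1,2) by (intro power_mono) auto
  also have "\<dots> = 1/4" by (simp add: power2_eq_square)
  finally have "v * w^2 \<le> v/4" using assms(1) by (simp add: mult_left_mono)
  moreover have "0 \<le> v^2/4 * w^4" by simp
  ultimately show ?thesis using assms(3) by linarith
next
  case False
  then show ?thesis using mult_sq_le_add_quartic[OF assms(1,2), of "-w"] assms(1) by simp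
qed

definition anticonc_const :: "real \<Rightarrow> real" where
  "anticonc_const v = v/4 / (1 + (1 + v)^2 / v^2)"

lemma anticonc_const_pos: "0 < v \<Longrightarrow> 0 < anticonc_const v"
  unfolding anticonc_const_def by (intro divide_pos_pos) (auto intro: add_pos_nonneg)

lemma (in prob_space) anticonc_const_le_prob_gt:
  fixes Z :: "'a \<Rightarrow> real"
  assumes int: "integrable M Z" "integrable M (\<lambda>\<omega>. Z \<omega> ^ 2)" "integrable M (\<lambda>\<omega>. Z \<omega> ^ 4)"
    and mean: "expectation Z = 0"
    and second: "expectation (\<lambda>\<omega>. Z \<omega> ^ 2) = \<sigma>^2"
    and fourth: "expectation (\<lambda>\<omega>. Z \<omega> ^ 4) \<le> \<sigma>^4 / v"
    and "0 < \<sigma>" and "0 < v" and "v \<le> 1/4"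
  shows "anticonc_const v \<le> prob {\<omega> \<in> space M. v/4 * \<sigma> < Z \<omega>}"
proof -
  define C where "C = 1 + (1 + v)^2 / v^2"
  define A where "A = {\<omega> \<in> space M. v/4 * \<sigma> < Z \<omega>}"
  define q where "q w = w + v * w^2 - v^2/4 * w^4 - v/2" for w
  have "0 < C" unfolding C_def by (simp add: add_pos_nonneg)
  have A_sets: "A \<in> events" unfolding A_def using int(1) by measurable
  have q_le: "q (Z \<omega> / \<sigma>) / C \<le> indicator A \<omega>" if "\<omega> \<in> space M" for \<omega>
  proof (cases "\<omega> \<in> A")
    case True
    then show ?thesis
      using quartic_le_const[OF \<open>0 < v\<close>, of "Z \<omega> / \<sigma>"] \<open>0 < v\<close> \<open>0 < C\<close>
      by (simp add: q_def C_def)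
  next
    case False
    then have below: "Z \<omega> / \<sigma> \<le> v/4" using that \<open>0 < \<sigma>\<close> by (simp add: A_def pos_divide_le_eq)
    have "q (Z \<omega> / \<sigma>) \<le> 0"
      using quartic_le_below[OF \<open>0 < v\<close> \<open>v \<le> 1/4\<close> below] by (simp add: q_def)
    then show ?thesis using False \<open>0 < C\<close> by (simp add: divide_nonpos_pos)
  qed
  have q_int: "integrable M (\<lambda>\<omega>. q (Z \<omega> / \<sigma>) / C)"
    unfolding q_def using int by (simp add: power_divide)
  have "expectation (\<lambda>\<omega>. q (Z \<omega> / \<sigma>) / C)
      = (expectation Z / \<sigma> + v * (expectation (\<lambda>\<omega>. Z \<omega> ^ 2) / \<sigma>^2)
         - v^2/4 * (expectation (\<lambda>\<omega>. Z \<omega> ^ 4) / \<sigma>^4) - v/2) / C"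
    unfolding q_def using int by (simp add: power_divide prob_space)
  also have "\<dots> \<ge> (v - v^2/4 * (1/v) - v/2) / C"
  proof -
    have "expectation (\<lambda>\<omega>. Z \<omega> ^ 4) / \<sigma>^4 \<le> 1/v"
      using fourth \<open>0 < \<sigma>\<close> by (simp add: divide_le_eq field_simps)
    then have "v^2/4 * (expectation (\<lambda>\<omega>. Z \<omega> ^ 4) / \<sigma>^4) \<le> v^2/4 * (1/v)"
      by (rule mult_left_mono) simp
    then show ?thesis
      using mean second \<open>0 < \<sigma>\<close> \<open>0 < C\<close> by (intro divide_right_mono) simp_all
  qed
  finally have "v/4 / C \<le> expectation (\<lambda>\<omega>. q (Z \<omega> / \<sigma>) / C)"
    using \<open>0 < v\<close> by (simp add: power2_eq_square)
  also have "\<dots> \<le> expectation (indicator A)"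
    using q_int A_sets q_le by (intro integral_mono_AE) (auto simp: emeasure_eq_measure)
  also have "\<dots> = prob A" using A_sets by simp
  finally show ?thesis unfolding anticonc_const_def A_def C_def .
qed

locale centred_indep_seq = prob_space +
  fixes X :: "nat \<Rightarrow> 'a \<Rightarrow> real" and v :: real
  assumes indep_X: "indep_vars (\<lambda>_. borel) X UNIV"
    and abs_X_le_1: "\<And>i \<omega>. \<omega> \<in> space M \<Longrightarrow> \<bar>X i \<omega>\<bar> \<le> 1"
    and expectation_X: "\<And>i. expectation (X i) = 0"
    and expectation_X_sq: "\<And>i. expectation (\<lambda>\<omega>. X i \<omega> ^ 2) = v"
begin

definition wsum :: "(nat \<Rightarrow> real) \<Rightarrow> nat \<Rightarrow> 'a \<Rightarrow> real" where
  "wsum c n \<omega> = (\<Sum>i<n. c i * X i \<omega>)"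

lemma X_measurable [measurable]: "X i \<in> borel_measurable M"
  using indep_X by (simp add: indep_vars_def)

lemma wsum_measurable [measurable]: "wsum c n \<in> borel_measurable M"
  unfolding wsum_def by measurable

lemma wsum_Suc: "wsum c (Suc n) \<omega> = wsum c n \<omega> + c n * X n \<omega>"
  by (simp add: wsum_def)

lemma abs_wsum_le: "\<omega> \<in> space M \<Longrightarrow> \<bar>wsum c n \<omega>\<bar> \<le> (\<Sum>i<n. \<bar>c i\<bar>)"
  unfolding wsum_def
  by (rule order_trans[OF sum_abs sum_mono]) (auto simp: abs_mult intro: mult_left_le abs_X_le_1)

lemma integrable_wsum_pow_mult_X_pow: "integrable M (\<lambda>\<omega>. wsum c n \<omega> ^ a * X m \<omega> ^ b)"
proof (rule integrable_const_bound[where B="(\<Sum>i<n. \<bar>c i\<bar>) ^ a"])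
  show "AE \<omega> in M. norm (wsum c n \<omega> ^ a * X m \<omega> ^ b) \<le> (\<Sum>i<n. \<bar>c i\<bar>) ^ a"
  proof (rule AE_I2)
    fix \<omega> assume "\<omega> \<in> space M"
    then have "\<bar>wsum c n \<omega>\<bar> ^ a \<le> (\<Sum>i<n. \<bar>c i\<bar>) ^ a" and "\<bar>X m \<omega>\<bar> ^ b \<le> 1"
      by (auto intro: power_mono abs_wsum_le power_le_one abs_X_le_1)
    then have "\<bar>wsum c n \<omega>\<bar> ^ a * \<bar>X m \<omega>\<bar> ^ b \<le> (\<Sum>i<n. \<bar>c i\<bar>) ^ a * 1"
      by (intro mult_mono) auto
    then show "norm (wsum c n \<omega> ^ a * X m \<omega> ^ b) \<le> (\<Sum>i<n. \<bar>c i\<bar>) ^ a"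
      by (simp add: abs_mult power_abs)
  qed
qed simp

lemmas integrable_wsum_X =
  integrable_wsum_pow_mult_X_pow
  integrable_wsum_pow_mult_X_pow[of _ _ _ _ 0, simplified]
  integrable_wsum_pow_mult_X_pow[of _ _ 0, simplified]
  integrable_wsum_pow_mult_X_pow[of _ _ 1, simplified]
  integrable_wsum_pow_mult_X_pow[of _ _ _ _ 1, simplified]
  integrable_wsum_pow_mult_X_pow[of _ _ 1 _ 1, simplified]
  integrable_wsum_pow_mult_X_pow[of _ _ 1 _ 0, simplified]
  integrable_wsum_pow_mult_X_pow[of _ _ 0 _ 1, simplified]

lemma indep_var_wsum_pow_X_pow: "indep_var borel (\<lambda>\<omega>. wsum c n \<omega> ^ a) borel (\<lambda>\<omega>. X n \<omega> ^ b)"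
proof -
  have "indep_var (PiM {..<n} (\<lambda>_. borel)) (\<lambda>\<omega>. restrict (\<lambda>i. X i \<omega>) {..<n})
                  (PiM {n} (\<lambda>_. borel)) (\<lambda>\<omega>. restrict (\<lambda>i. X i \<omega>) {n})"
    by (rule indep_var_restrict[OF indep_X]) auto
  then have "indep_var borel ((\<lambda>f. (\<Sum>i<n. c i * f i) ^ a) \<circ> (\<lambda>\<omega>. restrict (\<lambda>i. X i \<omega>) {..<n}))
                       borel ((\<lambda>f. f n ^ b) \<circ> (\<lambda>\<omega>. restrict (\<lambda>i. X i \<omega>) {n}))"
    by (rule indep_var_compose) auto
  then show ?thesis by (simp add: o_def wsum_def)
qed

lemma expectation_wsum_pow_mult_X_pow:
  "expectation (\<lambda>\<omega>. wsum c n \<omega> ^ a * X n \<omega> ^ b)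
     = expectation (\<lambda>\<omega>. wsum c n \<omega> ^ a) * expectation (\<lambda>\<omega>. X n \<omega> ^ b)"
  using integrable_wsum_X by (intro indep_var_lebesgue_integral indep_var_wsum_pow_X_pow) auto

lemma expectation_X_pow4_le: "expectation (\<lambda>\<omega>. X i \<omega> ^ 4) \<le> v"
proof -
  have "X i \<omega> ^ 4 \<le> X i \<omega> ^ 2" if "\<omega> \<in> space M" for \<omega>
  proof -
    have "(X i \<omega>)\<^sup>2 \<le> 1" using abs_X_le_1[OF that] by (simp add: abs_square_le_1)
    then have "(X i \<omega>)\<^sup>2 * (X i \<omega>)\<^sup>2 \<le> 1 * (X i \<omega>)\<^sup>2" by (intro mult_right_mono) auto
    then show ?thesis by (simp add: power4_eq_xxxx power2_eq_square)
  qed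
  then have "expectation (\<lambda>\<omega>. X i \<omega> ^ 4) \<le> expectation (\<lambda>\<omega>. X i \<omega> ^ 2)"
    using integrable_wsum_X by (intro integral_mono) auto
  then show ?thesis by (simp add: expectation_X_sq)
qed

lemma v_nonneg: "0 \<le> v"
  using expectation_X_sq[of 0, symmetric] by simp

lemma expectation_wsum: "expectation (wsum c n) = 0"
proof (induction n)
  case (Suc n)
  then show ?case
    using integrable_wsum_X by (simp add: wsum_Suc[abs_def] expectation_X)
qed (simp add: wsum_def)

lemma expectation_wsum_sq: "expectation (\<lambda>\<omega>. wsum c n \<omega> ^ 2) = v * (\<Sum>i<n. (c i)^2)"
proof (induction n)
  case (Suc n)
  have "(\<lambda>\<omega>. wsum c (Suc n) \<omega> ^ 2)
      = (\<lambda>\<omega>. wsum c n \<omega> ^ 2 + (2 * c n * (wsum c n \<omega> ^ 1 * X n \<omega> ^ 1) + (c n)^2 * X n \<omega> ^ 2))"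
    by (simp add: wsum_Suc power2_eq_square algebra_simps)
  then have "expectation (\<lambda>\<omega>. wsum c (Suc n) \<omega> ^ 2)
      = expectation (\<lambda>\<omega>. wsum c n \<omega> ^ 2)
        + (2 * c n * expectation (\<lambda>\<omega>. wsum c n \<omega> ^ 1 * X n \<omega> ^ 1)
        + (c n)^2 * expectation (\<lambda>\<omega>. X n \<omega> ^ 2))"
    using integrable_wsum_X by simp
  then show ?case
    unfolding expectation_wsum_pow_mult_X_pow
    using Suc by (simp add: expectation_X expectation_X_sq algebra_simps)
qed (simp add: wsum_def)

lemma expectation_wsum_pow4_le:
  assumes "3 * v \<le> 1"
  shows "expectation (\<lambda>\<omega>. wsum c n \<omega> ^ 4) \<le> v * (\<Sum>i<n. (c i)^2)^2"
proof (induction n)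
  case (Suc n)
  define Q where "Q = (\<Sum>i<n. (c i)^2)"
  have "0 \<le> Q" by (simp add: Q_def sum_nonneg)
  have "(\<lambda>\<omega>. wsum c (Suc n) \<omega> ^ 4)
      = (\<lambda>\<omega>. wsum c n \<omega> ^ 4 + (4 * c n * (wsum c n \<omega> ^ 3 * X n \<omega> ^ 1)
          + (6 * (c n)^2 * (wsum c n \<omega> ^ 2 * X n \<omega> ^ 2)
          + (4 * (c n)^3 * (wsum c n \<omega> ^ 1 * X n \<omega> ^ 3) + (c n)^4 * X n \<omega> ^ 4))))"
    by (simp add: wsum_Suc power2_eq_square power3_eq_cube power4_eq_xxxx algebra_simps)
  then have "expectation (\<lambda>\<omega>. wsum c (Suc n) \<omega> ^ 4)
      = expectation (\<lambda>\<omega>. wsum c n \<omega> ^ 4)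
        + (4 * c n * expectation (\<lambda>\<omega>. wsum c n \<omega> ^ 3 * X n \<omega> ^ 1)
        + (6 * (c n)^2 * expectation (\<lambda>\<omega>. wsum c n \<omega> ^ 2 * X n \<omega> ^ 2)
        + (4 * (c n)^3 * expectation (\<lambda>\<omega>. wsum c n \<omega> ^ 1 * X n \<omega> ^ 3)
        + (c n)^4 * expectation (\<lambda>\<omega>. X n \<omega> ^ 4))))"
    using integrable_wsum_X by simp
  also have "\<dots> = expectation (\<lambda>\<omega>. wsum c n \<omega> ^ 4) + 6 * (c n)^2 * (v * Q) * v
                    + (c n)^4 * expectation (\<lambda>\<omega>. X n \<omega> ^ 4)"
    unfolding expectation_wsum_pow_mult_X_pow
    by (simp add: expectation_X expectation_X_sq expectation_wsum expectation_wsum_sq Q_def)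
  also have "\<dots> \<le> v * Q^2 + 2 * (c n)^2 * (v * Q) + (c n)^4 * v"
  proof -
    have "((c n)^2 * (v * Q)) * (6 * v) \<le> ((c n)^2 * (v * Q)) * 2"
      using assms v_nonneg \<open>0 \<le> Q\<close> by (intro mult_left_mono) simp_all
    then have "6 * (c n)^2 * (v * Q) * v \<le> 2 * (c n)^2 * (v * Q)"
      by (simp add: algebra_simps)
    then show ?thesis
      using Suc expectation_X_pow4_le[of n] unfolding Q_def
      by (intro add_mono mult_left_mono) simp_all
  qed
  also have "\<dots> = v * (\<Sum>i<Suc n. (c i)^2)^2"
    by (simp add: Q_def power2_eq_square power4_eq_xxxx algebra_simps)
  finally show ?case .
qed (simp add: wsum_def)

lemma anticonc_const_le_prob_wsum_gt:
  assumes "0 < v" and "v \<le> 1/4" and "0 < (\<Sum>i<n. (c i)^2)"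
  shows "anticonc_const v \<le> prob {\<omega> \<in> space M. v/4 * sqrt (v * (\<Sum>i<n. (c i)^2)) < wsum c n \<omega>}"
proof -
  define Q where "Q = (\<Sum>i<n. (c i)^2)"
  define \<sigma> where "\<sigma> = sqrt (v * Q)"
  have "0 < \<sigma>" using assms by (simp add: \<sigma>_def Q_def)
  then have "\<sigma>^2 = v * Q" by (simp add: \<sigma>_def)
  then have "\<sigma>^4 / v = v * Q^2"
    using \<open>0 < v\<close> power_mult[of \<sigma> 2 2] by (simp add: power2_eq_square)
  show ?thesis
    unfolding Q_def[symmetric] \<sigma>_def[symmetric] using \<open>0 < \<sigma>\<close> assms(1,2)
    by (intro anticonc_const_le_prob_gt integrable_wsum_X)
       (simp_all add: expectation_wsum expectation_wsum_sq expectation_wsum_pow4_le Q_def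
          \<open>\<sigma>^2 = v * Q\<close> \<open>\<sigma>^4 / v = v * Q^2\<close>)
qed

end

lemma prob_space_bern_seq: "prob_space (bern_seq p)"
  unfolding bern_seq_def by (rule prob_space_PiM) (rule measure_pmf.prob_space_axioms)

lemma distr_bern_seq_coord: "distr (bern_seq p) (measure_pmf (bernoulli_pmf p)) (\<lambda>\<omega>. \<omega> i) = bernoulli_pmf p"
  unfolding bern_seq_def by (rule distr_PiM_component) (auto intro: measure_pmf.prob_space_axioms)

lemma indep_vars_bern_seq_coord:
  "prob_space.indep_vars (bern_seq p) (\<lambda>_. measure_pmf (bernoulli_pmf p)) (\<lambda>i \<omega>. \<omega> i) UNIV"
proof -
  interpret prob_space "bern_seq p" by (rule prob_space_bern_seq)
  have "(\<lambda>\<omega>. \<lambda>i\<in>UNIV. \<omega> i) = (\<lambda>\<omega>::nat \<Rightarrow> bool. \<omega>)" by (auto simp: restrict_def)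
  then have "distr (bern_seq p) (\<Pi>\<^sub>M i\<in>UNIV. bernoulli_pmf p) (\<lambda>\<omega>. \<lambda>i\<in>UNIV. \<omega> i)
      = (\<Pi>\<^sub>M i\<in>UNIV. distr (bern_seq p) (bernoulli_pmf p) (\<lambda>\<omega>. \<omega> i))"
    by (simp add: distr_bern_seq_coord) (simp add: bern_seq_def)
  then show ?thesis
    by (subst indep_vars_iff_distr_eq_PiM) (auto simp: bern_seq_def)
qed

lemma expectation_bern_seq_coord:
  assumes "0 \<le> p" and "p \<le> 1"
  shows "integral\<^sup>L (bern_seq p) (\<lambda>\<omega>. g (\<omega> i)) = g True * p + g False * (1 - p)"
proof -
  have "integral\<^sup>L (bern_seq p) (\<lambda>\<omega>. g (\<omega> i))
      = integral\<^sup>L (distr (bern_seq p) (bernoulli_pmf p) (\<lambda>\<omega>. \<omega> i)) g"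
    by (subst integral_distr) (auto simp: bern_seq_def)
  then show ?thesis using assms by (simp add: distr_bern_seq_coord)
qed

lemma measure_bern_seq_all_False:
  assumes "0 \<le> p" and "p \<le> 1"
  shows "measure (bern_seq p) {\<omega> \<in> space (bern_seq p). \<forall>i<n. \<not> \<omega> i} = (1 - p)^n"
proof -
  let ?B = "measure_pmf (bernoulli_pmf p)"
  have "{\<omega> \<in> space (bern_seq p). \<forall>i<n. \<not> \<omega> i} = prod_emb UNIV (\<lambda>_. ?B) {..<n} (PiE {..<n} (\<lambda>_. {False}))"
    by (auto simp: bern_seq_def prod_emb_def space_PiM PiE_iff restrict_def fun_eq_iff)
  then have "emeasure (bern_seq p) {\<omega> \<in> space (bern_seq p). \<forall>i<n. \<not> \<omega> i} = (\<Prod>i<n. emeasure ?B {False})"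
    unfolding bern_seq_def by (simp only:) (rule emeasure_PiM_emb, auto intro: measure_pmf.prob_space_axioms)
  also have "\<dots> = ennreal ((1 - p)^n)"
    using assms by (simp add: emeasure_pmf_single prod_ennreal[symmetric] ennreal_power)
  finally show ?thesis
    using assms by (simp add: measure_def)
qed

definition bern_centred :: "real \<Rightarrow> nat \<Rightarrow> (nat \<Rightarrow> bool) \<Rightarrow> real" where
  "bern_centred p i \<omega> = p - (if \<omega> i then 1 else 0)"

lemma centred_indep_seq_bern_centred:
  assumes "0 \<le> p" and "p \<le> 1"
  shows "centred_indep_seq (bern_seq p) (bern_centred p) (p * (1 - p))"
proof -
  interpret prob_space "bern_seq p" by (rule prob_space_bern_seq)
  have "indep_vars (\<lambda>_. borel) (\<lambda>i \<omega>. (\<lambda>b. p - (if b then 1 else 0)) (\<omega> i)) UNIV"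
    by (rule indep_vars_compose2[OF indep_vars_bern_seq_coord]) auto
  then have "indep_vars (\<lambda>_. borel) (bern_centred p) UNIV"
    by (simp add: bern_centred_def[abs_def])
  moreover have "\<bar>bern_centred p i \<omega>\<bar> \<le> 1" for i \<omega>
    using assms by (simp add: bern_centred_def)
  moreover have "expectation (bern_centred p i) = 0" for i
    using expectation_bern_seq_coord[OF assms, of "\<lambda>b. p - (if b then 1 else 0)" i]
    by (simp add: bern_centred_def[abs_def] algebra_simps)
  moreover have "expectation (\<lambda>\<omega>. bern_centred p i \<omega> ^ 2) = p * (1 - p)" for i
    using expectation_bern_seq_coord[OF assms, of "\<lambda>b. (p - (if b then 1 else 0))^2" i]
    by (simp add: bern_centred_def power2_eq_square algebra_simps)
  ultimately show ?thesis
    by (intro centred_indep_seq.intro centred_indep_seq_axioms.intro prob_space_bern_seq)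
qed

lemma stake_seq_first_pos:
  assumes "stake_seq c"
  shows "0 < c 0"
proof (rule ccontr)
  assume "\<not> 0 < c 0"
  have "c i = 0" for i
  proof -
    have "c i \<le> c 0"
      using assms by (intro decseqD[of c]) (auto simp: stake_seq_def decseq_Suc_iff)
    moreover have "0 \<le> c i"
      using assms by (simp add: stake_seq_def)
    ultimately show ?thesis using \<open>\<not> 0 < c 0\<close> by linarith
  qed
  then have "c = (\<lambda>_. 0)" by auto
  then have "c sums 0" by simp
  moreover have "c sums 1" using assms by (simp add: stake_seq_def)
  ultimately show False using sums_unique2 by fastforce
qed

lemma centred_partial_sum_le_tail:
  assumes "stake_seq c" and "t \<le> S_gamma c \<omega>"
  shows "(\<Sum>i<n. c i * (t - (if \<omega> i then 1 else 0))) \<le> (1 - t) * (\<Sum>i. c (i + n))"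
proof -
  define f where "f i = c i * (if \<omega> i then 1 else 0)" for i
  define r where "r = (\<Sum>i. c (i + n))"
  have c_nonneg: "0 \<le> c i" and "summable c" for i
    using assms(1) by (auto simp: stake_seq_def sums_summable)
  have f_le: "f i \<le> c i" for i
    using c_nonneg by (simp add: f_def)
  have "summable f"
    using c_nonneg by (intro summable_comparison_test[OF _ \<open>summable c\<close>]) (auto simp: f_def)
  have "(\<Sum>i<n. c i) = 1 - r"
    using suminf_split_initial_segment[OF \<open>summable c\<close>, of n] sums_unique[of c 1] assms(1)
    by (simp add: stake_seq_def r_def)
  have "t \<le> (\<Sum>i. f (i + n)) + (\<Sum>i<n. f i)"
    using assms(2) suminf_split_initial_segment[OF \<open>summable f\<close>, of n]
    unfolding S_gamma_def f_def[symmetric] by simp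
  also have "(\<Sum>i. f (i + n)) \<le> r"
    unfolding r_def using \<open>summable f\<close> \<open>summable c\<close> f_le
    by (intro suminf_le) (auto simp: summable_iff_shift)
  finally have "t - r \<le> (\<Sum>i<n. f i)" by simp
  then have "(\<Sum>i<n. c i * (t - (if \<omega> i then 1 else 0))) \<le> t * (\<Sum>i<n. c i) - (t - r)"
    by (simp add: f_def algebra_simps sum_subtractf sum_distrib_left)
  then show ?thesis
    using \<open>(\<Sum>i<n. c i) = 1 - r\<close> by (simp add: r_def algebra_simps)
qed

lemma measure_S_gamma_ge_le:
  assumes "0 < p" and "p < 1" and "stake_seq c"
  shows "measure (bern_seq p) {\<omega> \<in> space (bern_seq p). p \<le> S_gamma c \<omega>}
           \<le> 1 - anticonc_const (p * (1 - p))"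
proof -
  define v where "v = p * (1 - p)"
  interpret centred_indep_seq "bern_seq p" "bern_centred p" v
    unfolding v_def using assms by (intro centred_indep_seq_bern_centred) auto
  have "0 < v" using assms by (simp add: v_def)
  have "v \<le> 1/4"
    using zero_le_power2[of "p - 1/2"] by (simp add: v_def power2_eq_square algebra_simps)
  have "0 < c 0" using assms(3) by (rule stake_seq_first_pos)
  have "summable c" using assms(3) by (auto simp: stake_seq_def sums_summable)
  moreover have "0 < v/4 * (sqrt v * c 0)" using \<open>0 < v\<close> \<open>0 < c 0\<close> by simp
  ultimately obtain N where N: "\<And>n. N \<le> n \<Longrightarrow> norm (\<Sum>i. c (i + n)) < v/4 * (sqrt v * c 0)"
    using suminf_exist_split by blast
  define n where "n = Suc N"
  define Q where "Q = (\<Sum>i<n. (c i)^2)"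
  define A where "A = {\<omega> \<in> space (bern_seq p). v/4 * sqrt (v * Q) < wsum c n \<omega>}"
  have "(c 0)^2 \<le> Q"
    unfolding Q_def n_def by (rule member_le_sum[of 0 _ "\<lambda>i. (c i)^2"]) auto
  then have "sqrt v * c 0 \<le> sqrt (v * Q)"
    using \<open>0 < v\<close> \<open>0 < c 0\<close> by (simp add: real_sqrt_mult real_le_rsqrt)
  have "0 < Q"
    using \<open>(c 0)^2 \<le> Q\<close> \<open>0 < c 0\<close> by (meson less_le_trans zero_less_power)
  then have "anticonc_const v \<le> prob A"
    unfolding A_def Q_def using \<open>0 < v\<close> \<open>v \<le> 1/4\<close> by (intro anticonc_const_le_prob_wsum_gt)
  have "A \<in> events" unfolding A_def by measurable
  have "{\<omega> \<in> space (bern_seq p). p \<le> S_gamma c \<omega>} \<subseteq> space (bern_seq p) - A"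
  proof safe
    fix \<omega> assume "p \<le> S_gamma c \<omega>" and "\<omega> \<in> A"
    have "0 \<le> (\<Sum>i. c (i + n))"
      using assms(3) \<open>summable c\<close> by (intro suminf_nonneg) (auto simp: stake_seq_def summable_iff_shift)
    have "wsum c n \<omega> \<le> (1 - p) * (\<Sum>i. c (i + n))"
      unfolding wsum_def bern_centred_def
      by (rule centred_partial_sum_le_tail[OF assms(3) \<open>p \<le> S_gamma c \<omega>\<close>])
    also have "\<dots> \<le> (\<Sum>i. c (i + n))"
      using \<open>0 \<le> (\<Sum>i. c (i + n))\<close> assms(1,2) by (intro mult_left_le_one_le) auto
    also have "\<dots> < v/4 * (sqrt v * c 0)" using N[of n] by (simp add: n_def)
    also have "\<dots> \<le> v/4 * sqrt (v * Q)"
      using \<open>sqrt v * c 0 \<le> sqrt (v * Q)\<close> \<open>0 < v\<close> by simp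
    finally show False using \<open>\<omega> \<in> A\<close> by (simp add: A_def)
  qed
  then have "prob {\<omega> \<in> space (bern_seq p). p \<le> S_gamma c \<omega>} \<le> prob (space (bern_seq p) - A)"
    using \<open>A \<in> events\<close> by (intro finite_measure_mono) auto
  also have "\<dots> \<le> 1 - anticonc_const v"
    using \<open>A \<in> events\<close> \<open>anticonc_const v \<le> prob A\<close> by (simp add: prob_compl)
  finally show ?thesis by (simp add: v_def)
qed

lemma one_minus_pow_floor_inverse_lt_half:
  fixes p :: real
  assumes "0 < p" and "p < 1"
  shows "(1 - p) ^ nat \<lfloor>1/p\<rfloor> < 1/2"
proof -
  define n where "n = nat \<lfloor>1/p\<rfloor>"
  have "1 < 1/p" using assms by simp
  then have "0 < real n" and "1/p < real n + 1"
    unfolding n_def by linarith+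
  then have "1 - p < real n / (real n + 1)"
    using assms by (simp add: field_simps)
  then have "(1 - p)^n < (real n / (real n + 1))^n"
    using assms \<open>0 < real n\<close> by (intro power_strict_mono) auto
  also have "\<dots> = 1 / (1 + 1 / real n)^n"
    using \<open>0 < real n\<close> by (simp add: field_simps power_divide)
  also have "\<dots> \<le> 1/2"
  proof -
    have "1 + real n * (1 / real n) \<le> (1 + 1 / real n)^n"
      by (rule Bernoulli_inequality) (simp add: order_trans[of _ 0])
    then show ?thesis using \<open>0 < real n\<close> by (simp add: field_simps)
  qed
  finally show ?thesis unfolding n_def .
qed

lemma S_gamma_eq_sum:
  assumes "\<And>i. n \<le> i \<Longrightarrow> c i = 0"
  shows "S_gamma c \<omega> = (\<Sum>i<n. c i * (if \<omega> i then 1 else 0))"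
  unfolding S_gamma_def using assms by (intro suminf_finite) auto

lemma stake_seq_uniform:
  assumes "0 < n"
  shows "stake_seq (\<lambda>i. if i < n then 1 / real n else 0)"
proof -
  have "(\<lambda>i. if i < n then 1 / real n else 0) sums (\<Sum>i<n. if i < n then 1 / real n else 0)"
    by (rule sums_finite) auto
  then show ?thesis using assms by (simp add: stake_seq_def)
qed

lemma exists_stake_seq_measure_S_gamma_ge_gt_half:
  assumes "0 < p" and "p < 1"
  shows "\<exists>c. stake_seq c \<and> 1/2 < measure (bern_seq p) {\<omega> \<in> space (bern_seq p). p \<le> S_gamma c \<omega>}"
proof -
  interpret prob_space "bern_seq p" by (rule prob_space_bern_seq)
  define n where "n = nat \<lfloor>1/p\<rfloor>"
  have "1 \<le> 1/p" using assms by simp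
  then have "0 < n" and "real n \<le> 1/p"
    unfolding n_def by linarith+
  define c where "c i = (if i < n then 1 / real n else 0)" for i
  have "stake_seq c" unfolding c_def[abs_def] using \<open>0 < n\<close> by (rule stake_seq_uniform)
  define E where "E = {\<omega> \<in> space (bern_seq p). \<forall>i<n. \<not> \<omega> i}"
  have "E \<in> events" by (simp add: E_def bern_seq_def)
  have "space (bern_seq p) - E \<subseteq> {\<omega> \<in> space (bern_seq p). p \<le> S_gamma c \<omega>}"
  proof safe
    fix \<omega> assume "\<omega> \<in> space (bern_seq p)" "\<omega> \<notin> E"
    then obtain i where "i < n" and "\<omega> i" by (auto simp: E_def)
    have "p \<le> c i * (if \<omega> i then 1 else 0)"
      using \<open>real n \<le> 1/p\<close> \<open>0 < n\<close> assms(1) \<open>i < n\<close> \<open>\<omega> i\<close> by (simp add: c_def field_simps)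
    also have "\<dots> \<le> (\<Sum>i<n. c i * (if \<omega> i then 1 else 0))"
      using \<open>i < n\<close> by (intro member_le_sum) (auto simp: c_def)
    also have "\<dots> = S_gamma c \<omega>"
      by (rule S_gamma_eq_sum[symmetric]) (simp add: c_def)
    finally show "p \<le> S_gamma c \<omega>" .
  qed
  moreover have "{\<omega> \<in> space (bern_seq p). p \<le> S_gamma c \<omega>} \<in> events"
    unfolding S_gamma_def bern_seq_def by measurable
  ultimately have "prob (space (bern_seq p) - E) \<le> prob {\<omega> \<in> space (bern_seq p). p \<le> S_gamma c \<omega>}"
    by (rule finite_measure_mono)
  moreover have "prob (space (bern_seq p) - E) = 1 - (1 - p)^n"
    using prob_compl[OF \<open>E \<in> events\<close>] measure_bern_seq_all_False[of p n] assms
    by (simp add: E_def)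
  moreover have "(1 - p)^n < 1/2"
    unfolding n_def using assms by (rule one_minus_pow_floor_inverse_lt_half)
  ultimately show ?thesis using \<open>stake_seq c\<close> by auto
qed

theorem proposition5:
  fixes p :: real
  assumes "0 < p" and "p < 1"
  shows "1/2 < pi_fun p p \<and> pi_fun p p < 1"
proof -
  interpret prob_space "bern_seq p" by (rule prob_space_bern_seq)
  define T where "T = {measure (bern_seq p) {\<omega> \<in> space (bern_seq p). S_gamma c \<omega> \<ge> p} | c. stake_seq c}"
  have "bdd_above T" unfolding T_def by (intro bdd_aboveI[where M=1]) auto
  obtain c where "stake_seq c" and c: "1/2 < prob {\<omega> \<in> space (bern_seq p). p \<le> S_gamma c \<omega>}"
    using exists_stake_seq_measure_S_gamma_ge_gt_half[OF assms] by blast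
  then have c_in_T: "prob {\<omega> \<in> space (bern_seq p). p \<le> S_gamma c \<omega>} \<in> T"
    unfolding T_def by blast
  then have "1/2 < Sup T"
    using c cSup_upper[OF c_in_T \<open>bdd_above T\<close>] by linarith
  moreover have "Sup T \<le> 1 - anticonc_const (p * (1 - p))"
    using c_in_T measure_S_gamma_ge_le[OF assms] unfolding T_def by (intro cSup_least) blast+
  moreover have "0 < anticonc_const (p * (1 - p))"
    using assms by (intro anticonc_const_pos) simp
  ultimately show ?thesis unfolding pi_fun_def T_def by linarith
qed

end
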